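(* Let $\Lambda_2,\Lambda_3,\Lambda_4\in\mathbb C$ with $\Lambda_4\ne0$, and let $\mathcal V^{[2]}$ be the Virasoro Whittaker module (any central charge) generated by $|J\rangle$ with $L_n|J\rangle=\Lambda_n|J\rangle$ for $n=2,3,4$ and $L_n|J\rangle=0$ for $n>4$. Consider formal power series $|\Psi\rangle=\sum_{k\ge0}\Lambda_5^k|\Psi_k\rangle$ with $|\Psi_0\rangle=|J\rangle$ and $|\Psi_k\rangle\in\mathcal V^{[2]}$ independent of the formal variable $\Lambda_5$, satisfying $L_n|\Psi\rangle=\Lambda_n|\Psi\rangle$ for $n=3,4,5$ and $L_n|\Psi\rangle=0$ for $n>5$. Then: (1) such a vector $|\Psi\rangle$ exists; (2) one can take $|\Psi_k\rangle\in U_{3k}$ for every $k\in\mathbb N$ (in fact this holds for the solution below); (3) $|\Psi\rangle$ is unique under the orthogonal gauge condition $\xi(|\Psi_k\rangle)=\delta_{k,0}$ for all $k\ge0$, and this unique solution satisfies $|\Psi_k\rangle\in U_{3k}$.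
   Context: Basis of $\mathcal V^{[2]}$: $v_\lambda=\mathbf L_{-\lambda}|J\rangle$, $\mathbf L_{-\lambda}=L_{-\lambda_1+2}\cdots L_{-\lambda_\ell+2}$, for partitions $\lambda=(\lambda_1\ge\dots\ge\lambda_\ell\ge1)$, with $v_\emptyset=|J\rangle$. Degree: $\deg v_\lambda=|\lambda|=\sum_i\lambda_i$; $U_m=\operatorname{span}\{v_\lambda:|\lambda|\le m\}$. The linear functional $\xi$ on $\mathcal V^{[2]}$ takes the coefficient of $v_\emptyset=|J\rangle$ in the expansion in the basis $\{v_\lambda\}$. The relations on $|\Psi\rangle$ hold order by order in $\Lambda_5$. *)

theory Defs
  imports Main Complex_Main
begin

definition is_partition :: "nat list \<Rightarrow> bool" where
  "is_partition lam \<longleftrightarrow> (\<forall>a\<in>set lam. 1 \<le> a) \<and> sorted_wrt (\<ge>) lam"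

definition vbasis :: "(int \<Rightarrow> 'v \<Rightarrow> 'v) \<Rightarrow> 'v \<Rightarrow> nat list \<Rightarrow> 'v" where
  "vbasis L J lam = foldr (\<lambda>a w. L (2 - int a) w) lam J"

definition Ufilt :: "(complex \<Rightarrow> 'v \<Rightarrow> 'v::ab_group_add) \<Rightarrow> (int \<Rightarrow> 'v \<Rightarrow> 'v) \<Rightarrow> 'v \<Rightarrow> nat \<Rightarrow> 'v set" where
  "Ufilt scale L J m = module.span scale (vbasis L J ` {lam. is_partition lam \<and> sum_list lam \<le> m})"

definition xi :: "(complex \<Rightarrow> 'v \<Rightarrow> 'v::ab_group_add) \<Rightarrow> (int \<Rightarrow> 'v \<Rightarrow> 'v) \<Rightarrow> 'v \<Rightarrow> 'v \<Rightarrow> complex" where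
  "xi scale L J x = module.representation scale (vbasis L J ` {lam. is_partition lam}) x J"

definition whittaker2 ::
  "(complex \<Rightarrow> 'v \<Rightarrow> 'v::ab_group_add) \<Rightarrow> (int \<Rightarrow> 'v \<Rightarrow> 'v) \<Rightarrow> complex \<Rightarrow> 'v \<Rightarrow>
   complex \<Rightarrow> complex \<Rightarrow> complex \<Rightarrow> bool" where
  "whittaker2 scale L c J l2 l3 l4 \<longleftrightarrow>
     vector_space scale \<and>
     (\<forall>n. Vector_Spaces.linear scale scale (L n)) \<and>
     (\<forall>m n x. L m (L n x) - L n (L m x) =
        scale (of_int (m - n)) (L (m + n) x) +
        (if m + n = 0 then scale (c / 12 * (of_int m ^ 3 - of_int m)) x else 0)) \<and>
     L 2 J = scale l2 J \<and> L 3 J = scale l3 J \<and> L 4 J = scale l4 J \<and>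
     (\<forall>n>4. L n J = 0) \<and>
     inj_on (vbasis L J) {lam. is_partition lam} \<and>
     module.independent scale (vbasis L J ` {lam. is_partition lam}) \<and>
     module.span scale (vbasis L J ` {lam. is_partition lam}) = UNIV"

text \<open>Psi = sum_k Lambda5^k Psi_k, with Psi_0 = J, solving (order by order in Lambda5)
  L_n Psi = Lambda_n Psi (n = 3,4,5), L_n Psi = 0 (n > 5).\<close>
definition psi_solution ::
  "(complex \<Rightarrow> 'v \<Rightarrow> 'v::ab_group_add) \<Rightarrow> (int \<Rightarrow> 'v \<Rightarrow> 'v) \<Rightarrow> 'v \<Rightarrow>
   complex \<Rightarrow> complex \<Rightarrow> (nat \<Rightarrow> 'v) \<Rightarrow> bool" where
  "psi_solution scale L J l3 l4 Psi \<longleftrightarrow>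
     Psi 0 = J \<and>
     (\<forall>k. L 3 (Psi k) = scale l3 (Psi k)) \<and>
     (\<forall>k. L 4 (Psi k) = scale l4 (Psi k)) \<and>
     L 5 (Psi 0) = 0 \<and> (\<forall>k. L 5 (Psi (Suc k)) = Psi k) \<and>
     (\<forall>n>5. \<forall>k. L n (Psi k) = 0)"

end

theory Submission
  imports Defs "HOL-Library.Multiset"
begin

(* The proof works in the degree filtration U_m. For a >= 1 the raising operator L_{2-a} maps
   U_m into U_{m+a}, and for n >= 3 the operator D_n = L_n - Lambda_n (with Lambda_5 := 0) maps
   U_m into U_{m+2-n}; to leading order D_{j+2} deletes a part j of the partition indexing v_lam,
   with coefficient 2 j l4 times its multiplicity, which is nonzero since l4 is. Hence
   xi (D_{r_k+2} ... D_{r_1+2} x) pairs the partitions [r_1, ..., r_k] of size <= m perfectly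
   with U_m.
   Given Psi_k in U_{3k}, prescribe the pairings of a vector x in U_{3k+3}: [3, r_2, ..., r_k]
   pairs with x as [r_2, ..., r_k] pairs with Psi_k, all other partitions pair to zero. As
   [D_m, D_n] = (m - n) D_{m+n} for m, n >= 3, this prescription and the pairing with x obey the
   same straightening relations on words, so they agree on all words; by perfectness L_5 x = Psi_k
   and D_n x = 0 for n ~= 5. Subtracting xi(x) J fixes the gauge. Conversely a vector killed by
   all D_n, n >= 3, pairs to zero with every nonempty word, hence is determined by its xi-value,
   which gives uniqueness. *)

section \<open>Partitions and words\<close>

lemma is_partition_Nil [simp]: "is_partition []"
  by (simp add: is_partition_def)

lemma is_partition_Cons:
  "is_partition (b # l) \<longleftrightarrow> 1 \<le> b \<and> (\<forall>a\<in>set l. a \<le> b) \<and> is_partition l"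
  by (auto simp: is_partition_def)

lemma is_partition_pos: "is_partition l \<Longrightarrow> a \<in> set l \<Longrightarrow> 1 \<le> a"
  by (auto simp: is_partition_def)

lemma is_partition_sum_list_eq_0: "is_partition l \<Longrightarrow> sum_list l = 0 \<Longrightarrow> l = []"
  by (cases l) (auto simp: is_partition_Cons)

lemma is_partition_mset_eq:
  assumes "is_partition l" "is_partition l'" "mset l = mset l'"
  shows "l = l'"
proof -
  have "sorted (rev l)" "sorted (rev l')"
    using assms(1,2) by (auto simp: is_partition_def sorted_wrt_rev)
  with assms(3) have "rev l = rev l'"
    by (metis mset_rev properties_for_sort)
  then show ?thesis by simp
qed

lemma is_partition_rev_sort: "\<forall>a\<in>set w. 1 \<le> a \<Longrightarrow> is_partition (rev (sort w))"
  by (simp add: is_partition_def sorted_wrt_rev)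

lemma is_partition_remove1: "is_partition l \<Longrightarrow> is_partition (remove1 j l)"
  by (induction l) (auto simp: is_partition_Cons dest: set_mp[OF set_remove1_subset])

lemma sum_list_remove1_add: "(j::nat) \<in> set l \<Longrightarrow> sum_list (remove1 j l) + j = sum_list l"
  by (induction l) auto

lemma Cons_remove1_max:
  "is_partition l \<Longrightarrow> \<forall>a\<in>set l. a \<le> j \<Longrightarrow> j \<in> set l \<Longrightarrow> j # remove1 j l = l"
  by (cases l) (auto simp: is_partition_Cons)

lemma finite_partitions_sum_list_le: "finite {l. is_partition l \<and> sum_list l \<le> m}"
proof (rule finite_subset)
  show "finite {l. set l \<subseteq> {0..m} \<and> length l \<le> m}"
    by (rule finite_lists_length_le) simp
  have "length l \<le> sum_list l" if "is_partition l" for l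
    using that by (induction l) (auto simp: is_partition_Cons)
  then show "{l. is_partition l \<and> sum_list l \<le> m} \<subseteq> {l. set l \<subseteq> {0..m} \<and> length l \<le> m}"
    using member_le_sum_list order_trans by fastforce
qed

definition partitions_of :: "nat \<Rightarrow> nat list set" where
  "partitions_of n = {l. is_partition l \<and> sum_list l = n}"

lemma finite_partitions_of: "finite (partitions_of n)"
  by (rule finite_subset[OF _ finite_partitions_sum_list_le[of n]]) (auto simp: partitions_of_def)

fun insert_part :: "nat \<Rightarrow> nat list \<Rightarrow> nat list" where
  "insert_part a [] = [a]"
| "insert_part a (b # l) = (if b \<le> a then a # b # l else b # insert_part a l)"

lemma set_insert_part [simp]: "set (insert_part a l) = insert a (set l)"
  by (induction l) auto

lemma sum_list_insert_part [simp]: "sum_list (insert_part a l) = a + sum_list l"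
  by (induction l) auto

lemma is_partition_insert_part: "is_partition l \<Longrightarrow> 1 \<le> a \<Longrightarrow> is_partition (insert_part a l)"
  by (induction l) (auto simp: is_partition_Cons)

lemma swap_invariant_move_front:
  assumes "\<And>u a b z. g (u @ a # b # z) = g (u @ b # a # z)"
  shows "g (u @ a # v) = g (a # u @ v)"
proof (induction u arbitrary: v rule: rev_induct)
  case Nil then show ?case by simp
next
  case (snoc x u)
  have "g ((u @ [x]) @ a # v) = g (u @ a # x # v)" using assms by simp
  also have "\<dots> = g (a # (u @ [x]) @ v)" using snoc by simp
  finally show ?case .
qed

lemma swap_invariant_mset_eq:
  assumes "\<And>u a b z. g (u @ a # b # z) = g (u @ b # a # z)" and "mset w = mset w'"
  shows "g w = g w'"
  using assms
proof (induction w arbitrary: g w')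
  case Nil then show ?case by simp
next
  case (Cons a w)
  have "a \<in> set w'" using Cons.prems(2) by (metis list.set_intros(1) set_mset_mset)
  then obtain u v where w': "w' = u @ a # v" by (meson split_list)
  have "g (a # w) = g (a # u @ v)"
  proof (rule Cons.IH[where g = "\<lambda>z. g (a # z)"])
    show "g (a # u' @ b # c # z) = g (a # u' @ c # b # z)" for u' b c z
      using Cons.prems(1)[of "a # u'"] by simp
    show "mset w = mset (u @ v)" using Cons.prems(2) w' by simp
  qed
  also have "\<dots> = g w'" using swap_invariant_move_front[of g, OF Cons.prems(1)] w' by simp
  finally show ?case .
qed

(* Downward induction on the size: modulo words of larger size, psi is invariant under adjacent
   swaps, hence determined by its value on the sorted word, which is a partition. *)
lemma straightening_vanishes:
  fixes \<psi> :: "nat list \<Rightarrow> 'a::ring" and \<gamma> :: "nat \<Rightarrow> nat \<Rightarrow> 'a"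
  assumes partition: "\<And>\<rho>. is_partition \<rho> \<Longrightarrow> sum_list \<rho> \<le> M \<Longrightarrow> \<psi> \<rho> = 0"
    and high: "\<And>w. \<forall>a\<in>set w. 1 \<le> a \<Longrightarrow> M < sum_list w \<Longrightarrow> \<psi> w = 0"
    and swap: "\<And>u a b z. \<forall>x\<in>set (u @ a # b # z). 1 \<le> x \<Longrightarrow>
      \<psi> (u @ a # b # z) = \<psi> (u @ b # a # z) + \<gamma> a b * \<psi> (u @ (a + b + 2) # z)"
    and w: "\<forall>a\<in>set w. 1 \<le> a"
  shows "\<psi> w = 0"
  using w
proof (induction "M - sum_list w" arbitrary: w rule: less_induct)
  case less
  show ?case
  proof (cases "M < sum_list w")
    case False
    define g where "g w' = (if (\<forall>a\<in>set w'. 1 \<le> a) \<and> sum_list w' = sum_list w then \<psi> w' else 0)" for w'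
    have "g (u @ a # b # z) = g (u @ b # a # z)" for u a b z
    proof (cases "(\<forall>x\<in>set (u @ a # b # z). 1 \<le> x) \<and> sum_list (u @ a # b # z) = sum_list w")
      case True
      then have "\<psi> (u @ (a + b + 2) # z) = 0"
        using less.hyps False high by (cases "M < sum_list w + 2") auto
      with True show ?thesis using swap[of u a b z] by (auto simp: g_def)
    qed (auto simp: g_def)
    then have "g w = g (rev (sort w))" by (rule swap_invariant_mset_eq) simp
    moreover have "is_partition (rev (sort w))" using less.prems by (rule is_partition_rev_sort)
    ultimately show ?thesis
      using partition[of "rev (sort w)"] less.prems False by (simp add: g_def sum_mset_sum_list[symmetric])
  qed (use high less.prems in blast)
qed

section \<open>The degree filtration\<close>

locale whittaker_module =
  fixes scale :: "complex \<Rightarrow> 'v::ab_group_add \<Rightarrow> 'v"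
    and L :: "int \<Rightarrow> 'v \<Rightarrow> 'v" and c :: complex and J :: 'v
    and l2 l3 l4 :: complex
  assumes whittaker2: "whittaker2 scale L c J l2 l3 l4"
begin

sublocale vector_space scale
  using whittaker2 by (simp add: whittaker2_def)

sublocale vector_space_pair scale scale ..

lemma linear_L: "Vector_Spaces.linear scale scale (L n)"
  using whittaker2 by (simp add: whittaker2_def)

lemma L_commute:
  "L m (L n x) = L n (L m x) + scale (of_int (m - n)) (L (m + n) x) +
     (if m + n = 0 then scale (c / 12 * (of_int m ^ 3 - of_int m)) x else 0)"
proof -
  have "L m (L n x) - L n (L m x) = scale (of_int (m - n)) (L (m + n) x) +
     (if m + n = 0 then scale (c / 12 * (of_int m ^ 3 - of_int m)) x else 0)"
    using whittaker2 unfolding whittaker2_def by blast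
  then show ?thesis by (simp add: algebra_simps)
qed

lemma L_J: "L 2 J = scale l2 J" "L 3 J = scale l3 J" "L 4 J = scale l4 J" "4 < n \<Longrightarrow> L n J = 0"
  using whittaker2 by (auto simp: whittaker2_def)

abbreviation vb :: "nat list \<Rightarrow> 'v" where
  "vb \<equiv> vbasis L J"

lemma vb_Nil [simp]: "vb [] = J" and vb_Cons: "vb (a # l) = L (2 - int a) (vb l)"
  by (simp_all add: vbasis_def)

lemma inj_on_vb: "inj_on vb {l. is_partition l}"
  and independent_vb: "independent (vb ` {l. is_partition l})"
  and span_vb: "span (vb ` {l. is_partition l}) = UNIV"
  using whittaker2 by (auto simp: whittaker2_def)

(* Indexed by integers, so that degree bounds need no truncated subtraction. *)
definition U :: "int \<Rightarrow> 'v set" where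
  "U m = span (vb ` {l. is_partition l \<and> int (sum_list l) \<le> m})"

lemma Ufilt_eq_U: "Ufilt scale L J m = U (int m)"
  by (simp add: Ufilt_def U_def)

lemma subspace_U: "subspace (U m)"
  by (simp add: U_def)

lemmas U_zero = subspace_0[OF subspace_U]
  and U_add = subspace_add[OF subspace_U]
  and U_diff = subspace_diff[OF subspace_U]
  and U_scale = subspace_scale[OF subspace_U]
  and U_sum = subspace_sum[OF subspace_U]

lemma U_if_scale: "x \<in> U m \<Longrightarrow> (if P then scale a x else 0) \<in> U m"
  by (simp add: U_scale U_zero)

lemma vb_in_U: "is_partition l \<Longrightarrow> int (sum_list l) \<le> m \<Longrightarrow> vb l \<in> U m"
  by (auto simp: U_def intro: span_base)

lemma J_in_U: "0 \<le> m \<Longrightarrow> J \<in> U m"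
  using vb_in_U[of "[]"] by simp

lemma U_monoD: "x \<in> U m \<Longrightarrow> m \<le> k \<Longrightarrow> x \<in> U k"
  unfolding U_def by (erule subsetD[OF span_mono, rotated]) auto

lemma U_neg: "m < 0 \<Longrightarrow> U m = {0}"
  by (simp add: U_def)

lemma exists_U: "\<exists>m. x \<in> U m"
proof -
  have "x \<in> span (vb ` {l. is_partition l})" by (simp add: span_vb)
  then show ?thesis
  proof (induction rule: span_induct_alt)
    case (step a v y)
    then obtain l m where l: "is_partition l" "v = vb l" and y: "y \<in> U m" by auto
    then have "v \<in> U (max m (int (sum_list l)))" "y \<in> U (max m (int (sum_list l)))"
      by (auto intro: vb_in_U U_monoD)
    then show ?case by (blast intro: U_add U_scale)
  qed (blast intro: U_zero)
qed

lemma linear_image_U: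
  assumes f: "Vector_Spaces.linear scale scale f" and x: "x \<in> U m"
    and vb_image: "\<And>l. is_partition l \<Longrightarrow> int (sum_list l) \<le> m \<Longrightarrow> f (vb l) \<in> U k"
  shows "f x \<in> U k"
proof -
  have "x \<in> span (vb ` {l. is_partition l \<and> int (sum_list l) \<le> m})"
    using x by (simp add: U_def)
  then show ?thesis
    by (induction rule: span_induct) (use vb_image linear_subspace_linear_preimage[OF f subspace_U] in auto)
qed

lemma U_decompose:
  assumes "x \<in> U (int m)"
  obtains x0 a where "x0 \<in> U (int m - 1)" "x = x0 + (\<Sum>l\<in>partitions_of m. scale (a l) (vb l))"
proof -
  have "{l. is_partition l \<and> int (sum_list l) \<le> int m} =
      {l. is_partition l \<and> int (sum_list l) \<le> int m - 1} \<union> partitions_of m"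
    by (auto simp: partitions_of_def)
  then obtain x0 z where x0: "x0 \<in> U (int m - 1)" and z: "z \<in> span (vb ` partitions_of m)"
    and x: "x = x0 + z"
    using assms by (auto simp: U_def image_Un span_Un)
  obtain u where "z = (\<Sum>v\<in>vb ` partitions_of m. scale (u v) v)"
    using z span_finite[OF finite_imageI[OF finite_partitions_of]] by auto
  also have "\<dots> = (\<Sum>l\<in>partitions_of m. scale (u (vb l)) (vb l))"
    by (rule sum.reindex_cong[OF inj_on_subset[OF inj_on_vb]]) (auto simp: partitions_of_def)
  finally show ?thesis using that[OF x0, of "\<lambda>l. u (vb l)"] x by blast
qed

lemma L_raises_U_if_vb:
  assumes a: "1 \<le> a" and x: "x \<in> U m"
    and vb_image: "\<And>l. is_partition l \<Longrightarrow> int (sum_list l) \<le> m \<Longrightarrow>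
      L (2 - int a) (vb l) - vb (insert_part a l) \<in> U (int (a + sum_list l) - 1)"
  shows "L (2 - int a) x \<in> U (m + int a)"
proof (rule linear_image_U[OF linear_L x])
  fix l assume l: "is_partition l" "int (sum_list l) \<le> m"
  have "L (2 - int a) (vb l) - vb (insert_part a l) \<in> U (m + int a)"
    using vb_image[OF l] l(2) by (force intro: U_monoD)
  moreover have "vb (insert_part a l) \<in> U (m + int a)"
    using l a by (intro vb_in_U is_partition_insert_part) auto
  ultimately show "L (2 - int a) (vb l) \<in> U (m + int a)"
    using U_add by fastforce
qed

lemma L_vb_insert_part:
  assumes "1 \<le> a" "is_partition l"
  shows "L (2 - int a) (vb l) - vb (insert_part a l) \<in> U (int (a + sum_list l) - 1)"
  using assms
proof (induction "a + sum_list l" arbitrary: a l rule: less_induct)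
  case less
  have L_U: "L (2 - int a') x \<in> U (m + int a')"
    if "x \<in> U m" "m + int a' < int (a + sum_list l)" "1 \<le> a'" for a' m x
    using that less.hyps by (intro L_raises_U_if_vb) auto
  show ?case
  proof (cases "l \<noteq> [] \<and> a < hd l")
    case True
    then obtain b l' where l: "l = b # l'" and ab: "a < b" by (cases l) auto
    let ?y = "vb l'" and ?T = "int (a + sum_list l) - 1"
    have l': "is_partition l'" "1 \<le> b" using less.prems l by (auto simp: is_partition_Cons)
    have y: "?y \<in> U ?T" using l' l ab by (auto intro: vb_in_U)
    define r where "r = L (2 - int a) ?y - vb (insert_part a l')"
    have r: "r \<in> U (int (a + sum_list l') - 1)"
      unfolding r_def using less.hyps less.prems(1) l' l by simp
    have "L (2 - int a) (vb l) - vb (insert_part a l) = L (2 - int b) r +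
        scale (of_int (int b - int a)) (L (2 - int (a + b - 2)) ?y) +
        (if 4 - int a - int b = 0 then scale (c / 12 * (of_int (2 - int a) ^ 3 - of_int (2 - int a))) ?y else 0)"
      using L_commute[of "2 - int a" "2 - int b" ?y] l ab less.prems(1)
      by (simp add: vb_Cons r_def linear_diff[OF linear_L] algebra_simps)
    also have "\<dots> \<in> U ?T"
    proof (intro U_add U_scale U_if_scale[OF y])
      show "L (2 - int b) r \<in> U ?T"
        using L_U[OF r, of b] l' l by (simp add: algebra_simps)
      have "L (2 - int (a + b - 2)) ?y \<in> U (int (sum_list l') + int (a + b - 2))"
        using L_U[OF vb_in_U[OF l'(1) order_refl], of "a + b - 2"] ab less.prems(1) l by simp
      then show "L (2 - int (a + b - 2)) ?y \<in> U ?T"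
        by (rule U_monoD) (use ab l in simp)
    qed
    finally show ?thesis .
  next
    case False
    then have "vb (insert_part a l) = L (2 - int a) (vb l)" by (cases l) (auto simp: vb_Cons)
    then show ?thesis by (simp add: U_zero)
  qed
qed

lemma L_raises_U:
  assumes "1 \<le> a" "x \<in> U m"
  shows "L (2 - int a) x \<in> U (m + int a)"
  by (rule L_raises_U_if_vb[OF assms]) (rule L_vb_insert_part[OF assms(1)])

section \<open>Leading terms of the lowering operators\<close>

(* The eigenvalues of L_n (n >= 3) on the solution, except that the eigenvalue of L_5 is the
   formal variable: it is set to 0 here, so that D 5 = L 5. *)
definition eigval :: "int \<Rightarrow> complex" where
  "eigval n = (if n = 3 then l3 else if n = 4 then l4 else 0)"

definition D :: "int \<Rightarrow> 'v \<Rightarrow> 'v" where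
  "D n x = L n x - scale (eigval n) x"

lemma linear_D: "Vector_Spaces.linear scale scale (D n)"
  unfolding D_def[abs_def]
  by (intro linear_compose_sub linear_L linear_compose_scale_right linear_id[unfolded id_def])

lemma D_L_commute:
  "D n (L m x) = L m (D n x) + scale (of_int (n - m)) (L (n + m) x) +
     (if n + m = 0 then scale (c / 12 * (of_int n ^ 3 - of_int n)) x else 0)"
  using L_commute[of n m x] by (simp add: D_def linear_diff[OF linear_L] linear_scale[OF linear_L])

lemma D_commute:
  assumes "3 \<le> m" "3 \<le> n"
  shows "D m (D n x) = D n (D m x) + scale (of_int (m - n)) (D (m + n) x)"
proof -
  have "eigval (m + n) = 0" using assms by (simp add: eigval_def)
  then show ?thesis
    using L_commute[of m n x] assms
    by (simp add: D_def linear_diff[OF linear_L] linear_scale[OF linear_L] algebra_simps)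
qed

definition D_kills_except5 :: "'v \<Rightarrow> bool" where
  "D_kills_except5 x \<longleftrightarrow> (\<forall>n\<ge>3. n \<noteq> 5 \<longrightarrow> D n x = 0)"

lemma D_kills_except5_iff:
  "D_kills_except5 x \<longleftrightarrow> L 3 x = scale l3 x \<and> L 4 x = scale l4 x \<and> (\<forall>n>5. L n x = 0)"
proof -
  have "(\<forall>n\<ge>3. n \<noteq> 5 \<longrightarrow> P n) \<longleftrightarrow> (\<forall>n. n = 3 \<or> n = 4 \<or> 5 < n \<longrightarrow> P n)"
    for P :: "int \<Rightarrow> bool"
    by (intro iff_allI) (smt (verit))
  then show ?thesis by (simp add: D_kills_except5_def D_def eigval_def all_conj_distrib)
qed

lemma D_kills_except5_J: "D_kills_except5 J"
  by (simp add: D_kills_except5_iff L_J)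

lemma subspace_D_kills_except5: "subspace {x. D_kills_except5 x}"
  by (auto simp: subspace_def D_kills_except5_def linear_0[OF linear_D] linear_add[OF linear_D]
      linear_scale[OF linear_D])

lemmas D_kills_except5_diff = subspace_diff[OF subspace_D_kills_except5, simplified]
  and D_kills_except5_scale = subspace_scale[OF subspace_D_kills_except5, simplified]

lemma psi_solution_iff:
  "psi_solution scale L J l3 l4 Psi \<longleftrightarrow>
     Psi 0 = J \<and> (\<forall>k. D_kills_except5 (Psi k)) \<and> (\<forall>k. L 5 (Psi (Suc k)) = Psi k)"
proof
  assume "psi_solution scale L J l3 l4 Psi"
  then show "Psi 0 = J \<and> (\<forall>k. D_kills_except5 (Psi k)) \<and> (\<forall>k. L 5 (Psi (Suc k)) = Psi k)"
    by (simp add: psi_solution_def D_kills_except5_iff)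
next
  assume Psi: "Psi 0 = J \<and> (\<forall>k. D_kills_except5 (Psi k)) \<and> (\<forall>k. L 5 (Psi (Suc k)) = Psi k)"
  then have "Psi 0 = J" by blast
  with Psi show "psi_solution scale L J l3 l4 Psi"
    by (simp add: psi_solution_def D_kills_except5_iff L_J)
qed

(* The coefficient 2 j l4 stems from [L_{j+2}, L_{2-j}] = 2 j L_4, and L_4 acts as l4 in top degree. *)
definition D_leading :: "nat list \<Rightarrow> bool" where
  "D_leading l \<longleftrightarrow> (\<forall>j\<ge>1. D (int j + 2) (vb l) -
     scale (of_nat (2 * j * count (mset l) j) * l4) (vb (remove1 j l)) \<in> U (int (sum_list l) - int j - 1))"

lemma D_vb_in_U:
  assumes l: "is_partition l" "D_leading l" and j: "1 \<le> j"
  shows "D (int j + 2) (vb l) \<in> U (int (sum_list l) - int j)"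
proof -
  let ?k = "of_nat (2 * j * count (mset l) j) * l4"
  have "D (int j + 2) (vb l) - scale ?k (vb (remove1 j l)) \<in> U (int (sum_list l) - int j)"
    using l(2) j by (auto simp: D_leading_def intro: U_monoD)
  moreover have "scale ?k (vb (remove1 j l)) \<in> U (int (sum_list l) - int j)"
  proof (cases "j \<in> set l")
    case True
    then show ?thesis
      using sum_list_remove1_add[OF True] l(1)
      by (intro U_scale vb_in_U is_partition_remove1) auto
  next
    case False
    then have "count (mset l) j = 0" by simp
    then show ?thesis by (simp add: U_zero del: count_mset_0_iff)
  qed
  ultimately show ?thesis using U_add by fastforce
qed

lemma L_vb_in_U:
  assumes l: "is_partition l" "L 2 (vb l) \<in> U (int (sum_list l))" "D_leading l" and n: "n \<noteq> 4"
  shows "L n (vb l) \<in> U (int (sum_list l) + 3 - n)"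
proof -
  consider "n \<le> 1" | "n = 2" | "n = 3" | "5 \<le> n" using n by linarith
  then show ?thesis
  proof cases
    case 1
    then have "L (2 - int (nat (2 - n))) (vb l) \<in> U (int (sum_list l) + int (nat (2 - n)))"
      using l(1) by (intro L_raises_U vb_in_U) auto
    with 1 show ?thesis by (auto elim: U_monoD)
  next
    case 2
    with l(2) show ?thesis by (auto elim: U_monoD)
  next
    case 3
    have "D (int 1 + 2) (vb l) \<in> U (int (sum_list l) - 1)" using D_vb_in_U[OF l(1,3), of 1] by simp
    moreover have "L 3 (vb l) = D 3 (vb l) + scale l3 (vb l)" by (simp add: D_def eigval_def)
    ultimately show ?thesis
      using 3 l(1) by (auto intro!: U_add U_scale vb_in_U elim: U_monoD)
  next
    case 4
    have "D (int (nat (n - 2)) + 2) (vb l) \<in> U (int (sum_list l) - int (nat (n - 2)))"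
      using 4 by (intro D_vb_in_U[OF l(1,3)]) auto
    moreover have "L n (vb l) = D n (vb l)" using 4 by (simp add: D_def eigval_def)
    ultimately show ?thesis using 4 by (auto elim: U_monoD)
  qed
qed

lemma L2_vb_Cons:
  assumes bl: "is_partition (b # l)" and IH: "L 2 (vb l) \<in> U (int (sum_list l))" "D_leading l"
  shows "L 2 (vb (b # l)) \<in> U (int (sum_list (b # l)))"
proof -
  let ?y = "vb l" and ?T = "int (sum_list (b # l))"
  have l: "is_partition l" "1 \<le> b" using bl by (auto simp: is_partition_Cons)
  have y: "?y \<in> U (int (sum_list l))" using l by (simp add: vb_in_U)
  have "L 2 (vb (b # l)) = L (2 - int b) (L 2 ?y) + scale (of_int (int b)) (L (4 - int b) ?y) +
      (if 4 - int b = 0 then scale (c / 12 * (2 ^ 3 - 2)) ?y else 0)"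
    using L_commute[of 2 "2 - int b" ?y] by (simp add: vb_Cons)
  also have "\<dots> \<in> U ?T"
  proof (intro U_add U_scale)
    show "L (2 - int b) (L 2 ?y) \<in> U ?T"
      using L_raises_U[OF l(2) IH(1)] by (simp add: add.commute)
    show "L (4 - int b) ?y \<in> U ?T"
      using L_vb_in_U[OF l(1) IH, of "4 - int b"] l(2) by (auto elim: U_monoD)
    show "(if 4 - int b = 0 then scale (c / 12 * (2 ^ 3 - 2)) ?y else 0) \<in> U ?T"
      using U_monoD[OF y, of ?T] by (intro U_if_scale) simp
  qed
  finally show ?thesis .
qed

lemma D_vb_Cons_mod_U:
  assumes bl: "is_partition (b # l)" and lead: "D_leading l" and j: "1 \<le> j"
  shows "D (int j + 2) (vb (b # l)) - scale (of_nat (2 * j * count (mset l) j) * l4) (vb (b # remove1 j l))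
      - scale (of_int (int j + int b)) (L (int j + 4 - int b) (vb l))
    \<in> U (int (sum_list (b # l)) - int j - 1)" (is "?lhs \<in> ?R")
proof -
  let ?y = "vb l" and ?n = "int j + 2" and ?m = "2 - int b"
  let ?k = "of_nat (2 * j * count (mset l) j) * l4"
  have l: "is_partition l" "1 \<le> b" using bl by (auto simp: is_partition_Cons)
  define r where "r = D ?n ?y - scale ?k (vb (remove1 j l))"
  have Lr: "L ?m r \<in> ?R"
  proof -
    have "r \<in> U (int (sum_list l) - int j - 1)" using lead j by (simp add: D_leading_def r_def)
    from L_raises_U[OF l(2) this] show ?thesis by (simp add: algebra_simps)
  qed
  define cen where "cen = (if ?n + ?m = 0 then scale (c / 12 * (of_int ?n ^ 3 - of_int ?n)) ?y else 0)"
  have cen: "cen \<in> ?R"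
  proof (cases "?n + ?m = 0")
    case True
    then have "?y \<in> ?R" using l by (intro vb_in_U) auto
    then show ?thesis by (simp add: cen_def U_if_scale)
  qed (simp add: cen_def U_zero)
  have "L ?m (D ?n ?y) = scale ?k (vb (b # remove1 j l)) + L ?m r"
    by (simp add: r_def vb_Cons linear_diff[OF linear_L] linear_scale[OF linear_L])
  then have "?lhs = L ?m r + cen"
    using D_L_commute[of ?n ?m ?y] by (simp add: cen_def vb_Cons algebra_simps)
  then show ?thesis using Lr cen by (simp add: U_add)
qed

lemma D_leading_Cons:
  assumes bl: "is_partition (b # l)" and IH: "L 2 (vb l) \<in> U (int (sum_list l))" "D_leading l"
  shows "D_leading (b # l)"
  unfolding D_leading_def
proof (intro allI impI)
  fix j :: nat assume j: "1 \<le> j"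
  let ?y = "vb l" and ?R = "U (int (sum_list (b # l)) - int j - 1)"
  let ?k = "of_nat (2 * j * count (mset l) j) * l4"
  have l: "is_partition l" "\<forall>a\<in>set l. a \<le> b" using bl by (auto simp: is_partition_Cons)
  have main: "D (int j + 2) (vb (b # l)) - scale ?k (vb (b # remove1 j l))
      - scale (of_int (int j + int b)) (L (int j + 4 - int b) ?y) \<in> ?R"
    by (rule D_vb_Cons_mod_U[OF bl IH(2) j])
  show "D (int j + 2) (vb (b # l)) -
      scale (of_nat (2 * j * count (mset (b # l)) j) * l4) (vb (remove1 j (b # l))) \<in> ?R"
  proof (cases "b = j")
    case True
    have vb_remove1: "scale ?k (vb (b # remove1 j l)) = scale ?k ?y"
      using Cons_remove1_max[OF l(1)] l(2) True by (cases "j \<in> set l") auto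
    have index: "int j + 4 - int b = 4" "int j + int b = 2 * int j" using True by auto
    have main': "D (int j + 2) (vb (b # l)) - scale ?k ?y
        - scale (of_int (2 * int j)) (L 4 ?y) \<in> ?R"
      using main unfolding vb_remove1 index .
    have "D (int 2 + 2) ?y \<in> U (int (sum_list l) - 2)"
      using D_vb_in_U[OF l(1) IH(2), of 2] by simp
    then have "D 4 ?y \<in> ?R" using True by (auto elim: U_monoD)
    from U_add[OF main' U_scale[OF this, of "of_int (2 * int j)"]]
    show ?thesis
      using True by (simp add: D_def[of 4] eigval_def algebra_simps)
  next
    case False
    have "L (int j + 4 - int b) ?y \<in> U (int (sum_list l) + 3 - (int j + 4 - int b))"
      using False by (intro L_vb_in_U[OF l(1) IH]) auto
    then have "L (int j + 4 - int b) ?y \<in> ?R" by (auto elim: U_monoD)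
    from U_add[OF main U_scale[OF this, of "of_int (int j + int b)"]] show ?thesis
      using False by simp
  qed
qed

lemma L2_vb_in_U_and_D_leading:
  "is_partition l \<Longrightarrow> L 2 (vb l) \<in> U (int (sum_list l)) \<and> D_leading l"
proof (induction l)
  case Nil
  have "D (int j + 2) J = 0" if j: "1 \<le> j" for j
  proof -
    consider "j = 1" | "j = 2" | "3 \<le> j" using j by linarith
    then show ?thesis by cases (auto simp: D_def eigval_def L_J)
  qed
  then show ?case by (simp add: D_leading_def L_J U_scale J_in_U U_zero)
next
  case (Cons b l)
  then show ?case
    using L2_vb_Cons D_leading_Cons by (simp add: is_partition_Cons)
qed

lemma D_lowers_U:
  assumes "1 \<le> j" "x \<in> U m"
  shows "D (int j + 2) x \<in> U (m - int j)"
proof (rule linear_image_U[OF linear_D assms(2)])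
  fix l assume l: "is_partition l" "int (sum_list l) \<le> m"
  have "D (int j + 2) (vb l) \<in> U (int (sum_list l) - int j)"
    using D_vb_in_U[OF l(1) _ assms(1)] L2_vb_in_U_and_D_leading[OF l(1)] by blast
  then show "D (int j + 2) (vb l) \<in> U (m - int j)"
    by (rule U_monoD) (use l(2) in simp)
qed

section \<open>The pairing between words and vectors\<close>

definition Dword :: "nat list \<Rightarrow> 'v \<Rightarrow> 'v" where
  "Dword w = fold (\<lambda>j. D (int j + 2)) w"

lemma Dword_Nil [simp]: "Dword [] x = x"
  and Dword_Cons [simp]: "Dword (j # w) x = Dword w (D (int j + 2) x)"
  by (simp_all add: Dword_def)

lemma Dword_append: "Dword (u @ w) x = Dword w (Dword u x)"
  by (simp add: Dword_def)

lemma linear_Dword: "Vector_Spaces.linear scale scale (Dword w)"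
proof (induction w)
  case (Cons j w)
  from Vector_Spaces.linear_compose[OF linear_D Cons.IH] show ?case
    by (simp add: o_def Dword_def[symmetric])
qed (simp add: Dword_def[symmetric] linear_id[unfolded id_def])

lemma Dword_swap:
  assumes "1 \<le> a" "1 \<le> b"
  shows "Dword (u @ a # b # z) x =
    Dword (u @ b # a # z) x + scale (of_int (int b - int a)) (Dword (u @ (a + b + 2) # z) x)"
proof -
  have index_sum: "int b + 2 + (int a + 2) = int (a + b + 2) + 2" by simp
  have "D (int b + 2) (D (int a + 2) (Dword u x)) = D (int a + 2) (D (int b + 2) (Dword u x)) +
      scale (of_int (int b - int a)) (D (int (a + b + 2) + 2) (Dword u x))"
    using D_commute[of "int b + 2" "int a + 2" "Dword u x"] assms unfolding index_sum by simp
  then show ?thesis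
    by (simp add: Dword_append linear_add[OF linear_Dword] linear_scale[OF linear_Dword])
qed

lemma Dword_lowers_U:
  "\<forall>a\<in>set w. 1 \<le> a \<Longrightarrow> x \<in> U m \<Longrightarrow> Dword w x \<in> U (m - int (sum_list w))"
proof (induction w arbitrary: x m)
  case (Cons j w)
  have "D (int j + 2) x \<in> U (m - int j)" using Cons.prems by (simp add: D_lowers_U)
  then have "Dword w (D (int j + 2) x) \<in> U (m - int j - int (sum_list w))"
    using Cons.IH Cons.prems(1) by simp
  then show ?case by (simp add: diff_diff_eq)
qed simp

lemma Dword_eq_0:
  assumes "\<forall>a\<in>set w. 1 \<le> a" "x \<in> U m" "m < int (sum_list w)"
  shows "Dword w x = 0"
  using Dword_lowers_U[OF assms(1,2)] assms(3) by (simp add: U_neg)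

abbreviation \<xi> :: "'v \<Rightarrow> complex" where
  "\<xi> \<equiv> xi scale L J"

lemma module_hom_\<xi>: "module_hom scale (*) \<xi>"
  unfolding xi_def module_hom_iff_linear by (rule linear_representation[OF independent_vb span_vb])

lemma \<xi>_vb: "is_partition l \<Longrightarrow> \<xi> (vb l) = (if l = [] then 1 else 0)"
  using inj_on_vb unfolding xi_def
  by (auto simp: representation_basis[OF independent_vb] inj_on_def dest: sym)

lemma \<xi>_J: "\<xi> J = 1"
  using \<xi>_vb[of "[]"] by simp

definition pairing :: "nat list \<Rightarrow> 'v \<Rightarrow> complex" where
  "pairing w x = \<xi> (Dword w x)"

lemma module_hom_pairing: "module_hom scale (*) (pairing w)"
  unfolding pairing_def[abs_def]
  using module_hom_compose[OF linear_Dword[unfolded module_hom_iff_linear[symmetric]] module_hom_\<xi>]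
  by (simp add: o_def)

lemmas pairing_add = module_hom.add[OF module_hom_pairing]
  and pairing_scale = module_hom.scale[OF module_hom_pairing]
  and pairing_diff = module_hom.diff[OF module_hom_pairing]
  and pairing_sum = module_hom.sum[OF module_hom_pairing]
  and pairing_zero = module_hom.zero[OF module_hom_pairing]

lemma pairing_Nil: "pairing [] x = \<xi> x"
  and pairing_Cons: "pairing (j # w) x = pairing w (D (int j + 2) x)"
  by (simp_all add: pairing_def)

lemma pairing_swap:
  assumes "1 \<le> a" "1 \<le> b"
  shows "pairing (u @ a # b # z) x =
    pairing (u @ b # a # z) x + of_int (int b - int a) * pairing (u @ (a + b + 2) # z) x"
  using arg_cong[OF Dword_swap[OF assms, of u z x], of \<xi>]
  by (simp add: pairing_def module_hom.add[OF module_hom_\<xi>] module_hom.scale[OF module_hom_\<xi>])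

lemma pairing_eq_0:
  "\<forall>a\<in>set w. 1 \<le> a \<Longrightarrow> x \<in> U m \<Longrightarrow> m < int (sum_list w) \<Longrightarrow> pairing w x = 0"
  by (simp add: pairing_def Dword_eq_0 module_hom.zero[OF module_hom_\<xi>])

(* Any x with L 5 x = y and D_kills_except5 x has pairing w x = preimage_pairing y w, because
   pairing (j # w) x = pairing w (D (int j + 2) x). *)
definition preimage_pairing :: "'v \<Rightarrow> nat list \<Rightarrow> complex" where
  "preimage_pairing y w = (case w of [] \<Rightarrow> 0 | j # w' \<Rightarrow> if j = 3 then pairing w' y else 0)"

lemma preimage_pairing_swap:
  assumes y: "D_kills_except5 y" and pos: "\<forall>x\<in>set (u @ a # b # z). 1 \<le> x"
  shows "preimage_pairing y (u @ a # b # z) =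
    preimage_pairing y (u @ b # a # z) + of_int (int b - int a) * preimage_pairing y (u @ (a + b + 2) # z)"
proof (cases u)
  case Nil
  have "pairing (j # z') y = 0" if "1 \<le> j" "j \<noteq> 3" for j z'
    using y that by (simp add: pairing_Cons D_kills_except5_def pairing_zero)
  then show ?thesis using Nil pos by (auto simp: preimage_pairing_def)
next
  case (Cons j u')
  then show ?thesis using pos pairing_swap[of a b u' z y] by (simp add: preimage_pairing_def)
qed

end

section \<open>Perfectness of the pairing\<close>

locale nondegenerate_whittaker_module = whittaker_module scale L c J l2 l3 l4
  for scale :: "complex \<Rightarrow> 'v::ab_group_add \<Rightarrow> 'v" and L c J l2 l3 l4 +
  assumes l4_nonzero: "l4 \<noteq> 0"
begin

lemma pairing_vb_ne_0_iff:
  assumes "\<forall>a\<in>set w. 1 \<le> a" "is_partition l" "sum_list w = sum_list l"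
  shows "pairing w (vb l) \<noteq> 0 \<longleftrightarrow> mset w = mset l"
  using assms
proof (induction w arbitrary: l)
  case Nil
  then have "l = []" using is_partition_sum_list_eq_0 by simp
  then show ?case by (simp add: pairing_Nil \<xi>_J)
next
  case (Cons j w)
  let ?k = "of_nat (2 * j * count (mset l) j) * l4"
  have j: "1 \<le> j" and w: "\<forall>a\<in>set w. 1 \<le> a" using Cons.prems(1) by auto
  define r where "r = D (int j + 2) (vb l) - scale ?k (vb (remove1 j l))"
  have "r \<in> U (int (sum_list l) - int j - 1)"
    using L2_vb_in_U_and_D_leading[OF Cons.prems(2)] j by (simp add: D_leading_def r_def)
  then have "pairing w r = 0"
    using Cons.prems(3) by (intro pairing_eq_0[OF w]) auto
  then have pairing_Cons_vb: "pairing (j # w) (vb l) = ?k * pairing w (vb (remove1 j l))"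
    by (simp add: pairing_Cons r_def pairing_diff pairing_scale)
  show ?case
  proof (cases "j \<in> set l")
    case True
    have "?k \<noteq> 0" using True j l4_nonzero by simp
    moreover have "pairing w (vb (remove1 j l)) \<noteq> 0 \<longleftrightarrow> mset w = mset (remove1 j l)"
      using Cons.prems(3) sum_list_remove1_add[OF True]
      by (intro Cons.IH[OF w is_partition_remove1[OF Cons.prems(2)]]) simp
    moreover have "mset (j # w) = mset l \<longleftrightarrow> mset w = mset (remove1 j l)"
      using True by (auto dest: sym)
    ultimately show ?thesis by (simp add: pairing_Cons_vb)
  next
    case False
    then have "mset (j # w) \<noteq> mset l" by (metis list.set_intros(1) set_mset_mset)
    with False show ?thesis by (simp add: pairing_Cons_vb del: count_mset_0_iff)
  qed
qed

lemma pairing_vb_self_ne_0: "is_partition l \<Longrightarrow> pairing l (vb l) \<noteq> 0"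
  using pairing_vb_ne_0_iff is_partition_pos by blast

lemma pairing_sum_partitions_of:
  assumes \<rho>: "\<rho> \<in> partitions_of n"
  shows "pairing \<rho> (\<Sum>l\<in>partitions_of n. scale (a l) (vb l)) = a \<rho> * pairing \<rho> (vb \<rho>)"
proof -
  have pos: "\<forall>a\<in>set \<rho>. 1 \<le> a" and \<rho>': "is_partition \<rho>" "sum_list \<rho> = n"
    using \<rho> by (auto simp: partitions_of_def is_partition_def)
  have "pairing \<rho> (vb l) = 0" if "l \<in> partitions_of n" "l \<noteq> \<rho>" for l
    using pairing_vb_ne_0_iff[OF pos, of l] is_partition_mset_eq[OF \<rho>'(1), of l] that \<rho>'
    by (auto simp: partitions_of_def)
  then have "(\<Sum>l\<in>partitions_of n - {\<rho>}. a l * pairing \<rho> (vb l)) = 0"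
    by (intro sum.neutral) auto
  then show ?thesis
    by (simp add: sum.remove[OF finite_partitions_of \<rho>] pairing_add pairing_sum pairing_scale)
qed

lemma pairing_top_degree_eq_0:
  assumes x: "x \<in> U (int m)" and pairing_0: "\<And>\<rho>. \<rho> \<in> partitions_of m \<Longrightarrow> pairing \<rho> x = 0"
  shows "x \<in> U (int m - 1)"
proof -
  obtain x0 a where x0: "x0 \<in> U (int m - 1)" and x_eq: "x = x0 + (\<Sum>l\<in>partitions_of m. scale (a l) (vb l))"
    using U_decompose[OF x] .
  have "a \<rho> = 0" if \<rho>: "\<rho> \<in> partitions_of m" for \<rho>
  proof -
    have "pairing \<rho> x0 = 0"
      using \<rho> x0 by (intro pairing_eq_0) (auto simp: partitions_of_def dest: is_partition_pos)
    then have "pairing \<rho> x = a \<rho> * pairing \<rho> (vb \<rho>)"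
      by (simp add: x_eq pairing_add pairing_sum_partitions_of[OF \<rho>])
    with pairing_0[OF \<rho>] pairing_vb_self_ne_0 \<rho> show ?thesis by (auto simp: partitions_of_def)
  qed
  then show ?thesis using x0 by (simp add: x_eq)
qed

lemma pairing_eq_0_imp_eq_0:
  assumes "x \<in> U m" "\<And>\<rho>. is_partition \<rho> \<Longrightarrow> int (sum_list \<rho>) \<le> m \<Longrightarrow> pairing \<rho> x = 0"
  shows "x = 0"
  using assms
proof (induction "nat (m + 1)" arbitrary: m)
  case 0
  then show ?case by (simp add: U_neg)
next
  case (Suc n)
  then have "0 \<le> m" by linarith
  then obtain k where k: "m = int k" using nonneg_int_cases by blast
  show ?case
  proof (rule Suc.hyps(1)[of "m - 1"])
    show "n = nat (m - 1 + 1)" using Suc.hyps(2) by simp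
    show "x \<in> U (m - 1)"
      using pairing_top_degree_eq_0[of x k] Suc.prems k by (auto simp: partitions_of_def)
  qed (use Suc.prems in simp)
qed

lemma exists_pairing_eq:
  "\<exists>x\<in>U (int m). \<forall>\<rho>. is_partition \<rho> \<longrightarrow> sum_list \<rho> \<le> m \<longrightarrow> pairing \<rho> x = f \<rho>"
proof (induction m arbitrary: f)
  case 0
  have "pairing [] (scale (f []) J) = f []" by (simp add: pairing_Nil \<xi>_J module_hom.scale[OF module_hom_\<xi>])
  then show ?case
    using U_scale[OF J_in_U, of 0 "f []"] is_partition_sum_list_eq_0 by auto
next
  case (Suc m)
  define t where "t = (\<Sum>l\<in>partitions_of (Suc m). scale (f l / pairing l (vb l)) (vb l))"
  have t: "t \<in> U (int (Suc m))"
    unfolding t_def by (intro U_sum U_scale vb_in_U) (auto simp: partitions_of_def)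
  obtain x where x: "x \<in> U (int m)"
    and pairing_x: "\<forall>\<rho>. is_partition \<rho> \<longrightarrow> sum_list \<rho> \<le> m \<longrightarrow> pairing \<rho> x = f \<rho> - pairing \<rho> t"
    using Suc.IH[of "\<lambda>\<rho>. f \<rho> - pairing \<rho> t"] by blast
  have "t + x \<in> U (int (Suc m))" using t U_monoD[OF x] by (simp add: U_add)
  moreover have "pairing \<rho> (t + x) = f \<rho>" if \<rho>: "is_partition \<rho>" "sum_list \<rho> \<le> Suc m" for \<rho>
  proof (cases "sum_list \<rho> \<le> m")
    case True
    then show ?thesis using pairing_x \<rho> by (simp add: pairing_add)
  next
    case False
    then have \<rho>_top: "\<rho> \<in> partitions_of (Suc m)" using \<rho> by (simp add: partitions_of_def)
    have "pairing \<rho> x = 0"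
      using False x \<rho> by (intro pairing_eq_0) (auto dest: is_partition_pos)
    then show ?thesis
      using pairing_vb_self_ne_0[OF \<rho>(1)]
      by (simp add: pairing_add t_def pairing_sum_partitions_of[OF \<rho>_top])
  qed
  ultimately show ?case by blast
qed

section \<open>Solving the recursion for the coefficients\<close>

lemma pairing_eq_preimage_pairing:
  assumes y: "y \<in> U (int m)" "D_kills_except5 y" and x: "x \<in> U (int (m + 3))"
    and partition: "\<And>\<rho>. is_partition \<rho> \<Longrightarrow> sum_list \<rho> \<le> m + 3 \<Longrightarrow> pairing \<rho> x = preimage_pairing y \<rho>"
    and w: "\<forall>a\<in>set w. 1 \<le> a"
  shows "pairing w x = preimage_pairing y w"
proof -
  have "pairing w x - preimage_pairing y w = 0"
  proof (rule straightening_vanishes[where \<psi> = "\<lambda>w. pairing w x - preimage_pairing y w"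
        and \<gamma> = "\<lambda>a b. of_int (int b - int a)", OF _ _ _ w])
    show "pairing \<rho> x - preimage_pairing y \<rho> = 0" if "is_partition \<rho>" "sum_list \<rho> \<le> m + 3" for \<rho>
      using partition[OF that] by simp
    show "pairing w' x - preimage_pairing y w' = 0" if "\<forall>a\<in>set w'. 1 \<le> a" "m + 3 < sum_list w'" for w'
      using that x y(1) by (auto simp: preimage_pairing_def pairing_eq_0 split: list.split)
    show "pairing (u @ a # b # z) x - preimage_pairing y (u @ a # b # z) =
        pairing (u @ b # a # z) x - preimage_pairing y (u @ b # a # z) +
        of_int (int b - int a) * (pairing (u @ (a + b + 2) # z) x - preimage_pairing y (u @ (a + b + 2) # z))"
      if pos: "\<forall>x\<in>set (u @ a # b # z). 1 \<le> x" for u a b z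
    proof -
      have ab: "1 \<le> a" "1 \<le> b" using pos by auto
      show ?thesis
        unfolding pairing_swap[OF ab, of u z x] preimage_pairing_swap[OF y(2) pos] by (simp add: algebra_simps)
    qed
  qed
  then show ?thesis by simp
qed

lemma exists_L5_preimage:
  assumes y: "y \<in> U (int m)" "D_kills_except5 y"
  shows "\<exists>x\<in>U (int (m + 3)). D_kills_except5 x \<and> L 5 x = y"
proof -
  obtain x where x: "x \<in> U (int (m + 3))"
    and partition: "\<forall>\<rho>. is_partition \<rho> \<longrightarrow> sum_list \<rho> \<le> m + 3 \<longrightarrow> pairing \<rho> x = preimage_pairing y \<rho>"
    using exists_pairing_eq by blast
  have pairing_D: "pairing \<rho> (D (int j + 2) x) = preimage_pairing y (j # \<rho>)"
    if "is_partition \<rho>" "1 \<le> j" for \<rho> j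
  proof -
    have "\<forall>a\<in>set (j # \<rho>). 1 \<le> a" using that by (auto dest: is_partition_pos)
    from pairing_eq_preimage_pairing[OF y x partition[rule_format] this] show ?thesis
      by (simp add: pairing_Cons)
  qed
  have "D n x = 0" if n: "3 \<le> n" "n \<noteq> 5" for n
  proof -
    define j where "j = nat (n - 2)"
    have j: "n = int j + 2" "1 \<le> j" "j \<noteq> 3" using n by (auto simp: j_def)
    have "D (int j + 2) x = 0"
    proof (rule pairing_eq_0_imp_eq_0)
      show "D (int j + 2) x \<in> U (int (m + 3) - int j)" using D_lowers_U[OF j(2) x] .
      show "pairing \<rho> (D (int j + 2) x) = 0" if "is_partition \<rho>" for \<rho>
        using pairing_D[OF that j(2)] j(3) by (simp add: preimage_pairing_def)
    qed
    with j(1) show ?thesis by simp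
  qed
  moreover have "L 5 x = y"
  proof -
    have L5: "L 5 x = D (int 3 + 2) x" by (simp add: D_def eigval_def)
    have "D (int 3 + 2) x \<in> U (int (m + 3) - int 3)" using D_lowers_U[OF _ x, of 3] by simp
    then have "L 5 x - y \<in> U (int m)" using y(1) by (simp add: L5 U_diff)
    moreover have "pairing \<rho> (L 5 x - y) = 0" if "is_partition \<rho>" for \<rho>
      using pairing_D[OF that, of 3] by (simp add: L5 pairing_diff preimage_pairing_def)
    ultimately have "L 5 x - y = 0" by (rule pairing_eq_0_imp_eq_0)
    then show ?thesis by simp
  qed
  ultimately show ?thesis using x unfolding D_kills_except5_def by blast
qed

lemma exists_L5_preimage_gauge:
  assumes "y \<in> U (int m)" "D_kills_except5 y"
  shows "\<exists>x. x \<in> U (int (m + 3)) \<and> D_kills_except5 x \<and> L 5 x = y \<and> \<xi> x = 0"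
proof -
  obtain x where x: "x \<in> U (int (m + 3))" "D_kills_except5 x" "L 5 x = y"
    using exists_L5_preimage[OF assms] by blast
  let ?x = "x - scale (\<xi> x) J"
  have "?x \<in> U (int (m + 3))" using x(1) by (simp add: U_diff U_scale J_in_U)
  moreover have "D_kills_except5 ?x"
    by (intro D_kills_except5_diff D_kills_except5_scale x(2) D_kills_except5_J)
  moreover have "L 5 ?x = y" using x(3) by (simp add: linear_diff[OF linear_L] linear_scale[OF linear_L] L_J)
  moreover have "\<xi> ?x = 0"
    by (simp add: \<xi>_J module_hom.diff[OF module_hom_\<xi>] module_hom.scale[OF module_hom_\<xi>])
  ultimately show ?thesis by blast
qed

lemma D_kills_except5_L5_kernel:
  assumes "D_kills_except5 z" "L 5 z = 0" "\<xi> z = 0"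
  shows "z = 0"
proof -
  obtain m where z: "z \<in> U m" using exists_U by blast
  have "D (int j + 2) z = 0" if "1 \<le> j" for j
    using assms(1,2) that by (cases "j = 3") (auto simp: D_kills_except5_def D_def eigval_def)
  then have "pairing \<rho> z = 0" if "is_partition \<rho>" for \<rho>
    using that assms(3) by (cases \<rho>) (auto simp: pairing_Nil pairing_Cons is_partition_Cons pairing_zero)
  then show ?thesis using pairing_eq_0_imp_eq_0[OF z] by blast
qed

primrec psi_gauge :: "nat \<Rightarrow> 'v" where
  "psi_gauge 0 = J"
| "psi_gauge (Suc k) =
     (SOME x. x \<in> U (int (3 * k + 3)) \<and> D_kills_except5 x \<and> L 5 x = psi_gauge k \<and> \<xi> x = 0)"

lemma psi_gauge_Suc:
  assumes "psi_gauge k \<in> U (int (3 * k))" "D_kills_except5 (psi_gauge k)"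
  shows "psi_gauge (Suc k) \<in> U (int (3 * k + 3)) \<and> D_kills_except5 (psi_gauge (Suc k)) \<and>
    L 5 (psi_gauge (Suc k)) = psi_gauge k \<and> \<xi> (psi_gauge (Suc k)) = 0"
  unfolding psi_gauge.simps(2) by (rule someI_ex[OF exists_L5_preimage_gauge[OF assms]])

lemma psi_gauge_in_U: "psi_gauge k \<in> U (int (3 * k)) \<and> D_kills_except5 (psi_gauge k)"
proof (induction k)
  case 0
  show ?case by (simp add: J_in_U D_kills_except5_J)
next
  case (Suc k)
  with psi_gauge_Suc[of k] show ?case by (simp add: add.commute del: psi_gauge.simps)
qed

lemma psi_solution_psi_gauge: "psi_solution scale L J l3 l4 psi_gauge"
  using psi_gauge_in_U psi_gauge_Suc by (simp add: psi_solution_iff del: psi_gauge.simps(2))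

lemma \<xi>_psi_gauge: "\<xi> (psi_gauge k) = (if k = 0 then 1 else 0)"
  using psi_gauge_in_U psi_gauge_Suc by (cases k) (simp_all add: \<xi>_J del: psi_gauge.simps(2))

lemma psi_solution_unique:
  assumes P: "psi_solution scale L J l3 l4 P" and Q: "psi_solution scale L J l3 l4 Q"
    and \<xi>_eq: "\<And>k. \<xi> (P k) = \<xi> (Q k)"
  shows "P = Q"
proof
  fix k show "P k = Q k"
  proof (induction k)
    case 0
    show ?case using P Q by (simp add: psi_solution_iff)
  next
    case (Suc k)
    let ?d = "P (Suc k) - Q (Suc k)"
    have "?d = 0"
    proof (rule D_kills_except5_L5_kernel)
      show "D_kills_except5 ?d"
        using P Q by (intro D_kills_except5_diff) (simp_all add: psi_solution_iff)
      show "L 5 ?d = 0" using P Q Suc by (simp add: psi_solution_iff linear_diff[OF linear_L])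
      show "\<xi> ?d = 0" using \<xi>_eq by (simp add: module_hom.diff[OF module_hom_\<xi>])
    qed
    then show ?case by simp
  qed
qed

end

theorem theoremA1:
  fixes scale :: "complex \<Rightarrow> 'v \<Rightarrow> 'v::ab_group_add"
    and L :: "int \<Rightarrow> 'v \<Rightarrow> 'v" and J :: 'v
    and c l2 l3 l4 :: complex
  assumes "whittaker2 scale L c J l2 l3 l4"
    and "l4 \<noteq> 0"
  shows "(\<exists>Psi. psi_solution scale L J l3 l4 Psi)
       \<and> (\<exists>Psi. psi_solution scale L J l3 l4 Psi \<and> (\<forall>k. Psi k \<in> Ufilt scale L J (3 * k)))
       \<and> (\<exists>!Psi. psi_solution scale L J l3 l4 Psi \<and>
                 (\<forall>k. xi scale L J (Psi k) = (if k = 0 then 1 else 0)))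
       \<and> (\<forall>Psi. psi_solution scale L J l3 l4 Psi \<and>
                 (\<forall>k. xi scale L J (Psi k) = (if k = 0 then 1 else 0))
               \<longrightarrow> (\<forall>k. Psi k \<in> Ufilt scale L J (3 * k)))"
proof -
  interpret nondegenerate_whittaker_module scale L c J l2 l3 l4
    using assms by unfold_locales
  have unique: "Psi = psi_gauge"
    if "psi_solution scale L J l3 l4 Psi" "\<forall>k. \<xi> (Psi k) = (if k = 0 then 1 else 0)" for Psi
    using psi_solution_unique[OF that(1) psi_solution_psi_gauge] that(2) \<xi>_psi_gauge by simp
  have "\<forall>k. psi_gauge k \<in> Ufilt scale L J (3 * k)"
    using psi_gauge_in_U by (simp add: Ufilt_eq_U)
  then show ?thesis
    using psi_solution_psi_gauge \<xi>_psi_gauge unique by blast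
qed

end
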